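(* Let $G\in\mathcal{G}$ and $x\in[v^{\min},v^{\max}]$. The function $\Psi_x(b)=G(b)(x-b)+\widehat G(b)$ on $[v^{\min},v^{\max}]$ (the agent's expected utility in Mechanism 2 from bidding $b$ when his value is $x$) attains its maximum at $b=x$, with maximum value $\widehat G(x)$. Consequently, in Mechanism 2 an agent who knows $v_a$ obtains optimal expected utility $E[\widehat G(v_a)]$ by bidding $v_a$, and an agent who knows only the prior obtains optimal utility $\widehat G(E[v_a])$ by bidding $E[v_a]$; and there exists $G\in\mathcal{G}$ with $E[\widehat G(v_a)]-\widehat G(E[v_a])>c$ if and only if $c<E[\max(0,v_a-E[v_a])]$, the point mass at $E[v_a]$ being such a $G$ in that case.
   Context: $\mathcal{G}$ is the set of cdfs of probability measures on $[v^{\min},v^{\max}]$, $0\le v^{\min}<v^{\max}$, and $\widehat G(b)=\int_{v^{\min}}^bG(r)\,dr$. The agent's value $v_a$ is a random variable supported in $[v^{\min},v^{\max}]$; he can learn it at cost $c\ge0$. Mechanism 2 (parameter $G$): the agent bids $b\in[v^{\min},v^{\max}]$; with probability $G(b)$ the agent buys the object at price $b-\widehat G(b)/G(b)$; otherwise nothing happens. The agent is risk-neutral with quasi-linear utility. *)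

theory Defs
  imports "HOL-Probability.Probability"
begin

definition cdf_class :: "real \<Rightarrow> real \<Rightarrow> (real \<Rightarrow> real) set" where
  "cdf_class vmin vmax =
     {G. \<exists>\<mu>. prob_space \<mu> \<and> sets \<mu> = sets borel \<and> measure \<mu> {vmin..vmax} = 1 \<and> G = cdf \<mu>}"

definition Ghat :: "real \<Rightarrow> (real \<Rightarrow> real) \<Rightarrow> real \<Rightarrow> real" where
  "Ghat vmin G b = integral {vmin..b} G"

definition Psi :: "real \<Rightarrow> (real \<Rightarrow> real) \<Rightarrow> real \<Rightarrow> real \<Rightarrow> real" where
  "Psi vmin G x b = G b * (x - b) + Ghat vmin G b"

end

theory Submission
  imports Defs
begin

text \<open>For a monotone G with values in [0,1], Psi x b differs from Ghat x by the integral
  of G(b) - G over the interval between x and b, which has the sign making b = x optimal. Taking expectations, the informed agent gets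
  E[Ghat(v)], the uninformed one Ghat(E v); their difference is bounded by
  E[max 0 (v - E v)] since Ghat(y) - Ghat(x) \<le> max 0 (y - x), and the point mass at E v
  attains this bound because its Ghat is exactly max 0 (b - E v).\<close>

lemma cdf_class_cdf_properties:
  assumes "G \<in> cdf_class vmin vmax"
  shows "mono G" "0 \<le> G x" "G x \<le> 1"
proof -
  obtain \<mu> where "prob_space \<mu>" "sets \<mu> = sets borel" and G: "G = cdf \<mu>"
    using assms unfolding cdf_class_def by auto
  then interpret real_distribution \<mu>
    by (simp add: real_distribution_def real_distribution_axioms_def)
  show "mono G" using G cdf_nondecreasing by (simp add: mono_def)
  show "0 \<le> G x" "G x \<le> 1" using G cdf_nonneg cdf_bounded_prob by simp_all
qed

lemma mono_integrable_on_interval: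
  fixes G :: "real \<Rightarrow> real"
  shows "mono G \<Longrightarrow> G integrable_on {a..b}"
  by (rule integrable_on_mono_on) (simp add: mono_on_def mono_def)

lemma mono_integral_interval_bounds:
  fixes G :: "real \<Rightarrow> real"
  assumes "mono G" "a \<le> b"
  shows "G a * (b - a) \<le> integral {a..b} G" "integral {a..b} G \<le> G b * (b - a)"
proof -
  have "integral {a..b} (\<lambda>_. G a) \<le> integral {a..b} G"
    by (rule integral_le) (use assms mono_integrable_on_interval monoD in auto)
  then show "G a * (b - a) \<le> integral {a..b} G" using assms by (simp add: mult.commute)
  have "integral {a..b} G \<le> integral {a..b} (\<lambda>_. G b)"
    by (rule integral_le) (use assms mono_integrable_on_interval monoD in auto)
  then show "integral {a..b} G \<le> G b * (b - a)" using assms by (simp add: mult.commute)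
qed

lemma Ghat_diff:
  fixes G :: "real \<Rightarrow> real"
  assumes "mono G" "vmin \<le> a" "a \<le> b"
  shows "Ghat vmin G b - Ghat vmin G a = integral {a..b} G"
  using Henstock_Kurzweil_Integration.integral_combine[OF assms(2,3) mono_integrable_on_interval[OF assms(1)]]
  unfolding Ghat_def by simp

lemma Psi_diag [simp]: "Psi vmin G x x = Ghat vmin G x"
  by (simp add: Psi_def)

lemma Psi_le_Ghat:
  fixes G :: "real \<Rightarrow> real"
  assumes "mono G" "vmin \<le> x" "vmin \<le> b"
  shows "Psi vmin G x b \<le> Ghat vmin G x"
proof (cases "b \<le> x")
  case True
  then show ?thesis
    using Ghat_diff[OF assms(1,3) True] mono_integral_interval_bounds[OF assms(1) True]
    unfolding Psi_def by (simp add: algebra_simps)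
next
  case False
  then have "x \<le> b" by simp
  then show ?thesis
    using Ghat_diff[OF assms(1,2) \<open>x \<le> b\<close>] mono_integral_interval_bounds[OF assms(1) \<open>x \<le> b\<close>]
    unfolding Psi_def by (simp add: algebra_simps)
qed

lemma Ghat_mono:
  fixes G :: "real \<Rightarrow> real"
  assumes "mono G" "\<And>x. 0 \<le> G x"
  shows "mono (Ghat vmin G)"
proof (rule monoI)
  fix a b :: real
  assume "a \<le> b"
  have integral_G_nonneg: "0 \<le> integral {c..d} G" for c d
    by (rule integral_nonneg) (use assms mono_integrable_on_interval in auto)
  consider "b < vmin" | "a < vmin" "vmin \<le> b" | "vmin \<le> a" by linarith
  then show "Ghat vmin G a \<le> Ghat vmin G b"
  proof cases
    case 3
    then show ?thesis using Ghat_diff[OF assms(1) 3 \<open>a \<le> b\<close>] integral_G_nonneg[of a b] by linarith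
  qed (use \<open>a \<le> b\<close> integral_G_nonneg in \<open>simp_all add: Ghat_def\<close>)
qed

lemma Ghat_increment_le:
  fixes G :: "real \<Rightarrow> real"
  assumes "mono G" "\<And>x. 0 \<le> G x" "\<And>x. G x \<le> 1" "vmin \<le> a"
  shows "Ghat vmin G b - Ghat vmin G a \<le> max 0 (b - a)"
proof (cases "a \<le> b")
  case True
  have "G b * (b - a) \<le> 1 * (b - a)"
    using True assms(3)[of b] by (intro mult_right_mono) auto
  then show ?thesis
    using Ghat_diff[OF assms(1,4) True] mono_integral_interval_bounds(2)[OF assms(1) True] by simp
next
  case False
  then show ?thesis using Ghat_mono[OF assms(1,2), of vmin] by (auto simp: mono_def)
qed

lemma Ghat_bounds:
  fixes G :: "real \<Rightarrow> real"
  assumes "mono G" "\<And>x. 0 \<le> G x" "\<And>x. G x \<le> 1" "vmin \<le> x"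
  shows "0 \<le> Ghat vmin G x" "Ghat vmin G x \<le> x - vmin"
proof -
  have Ghat_vmin: "Ghat vmin G vmin = 0" by (simp add: Ghat_def)
  then show "0 \<le> Ghat vmin G x"
    using Ghat_mono[OF assms(1,2), of vmin] assms(4) by (metis monoD)
  show "Ghat vmin G x \<le> x - vmin"
    using Ghat_increment_le[OF assms(1-3), of vmin vmin x] Ghat_vmin assms(4) by simp
qed

lemma Psi_abs_le:
  fixes G :: "real \<Rightarrow> real"
  assumes "mono G" "\<And>x. 0 \<le> G x" "\<And>x. G x \<le> 1"
    and "x \<in> {vmin..vmax}" "b \<in> {vmin..vmax}"
  shows "\<bar>Psi vmin G x b\<bar> \<le> 2 * (vmax - vmin)"
proof -
  have "\<bar>G b * (x - b)\<bar> = G b * \<bar>x - b\<bar>" using assms(2) by (simp add: abs_mult)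
  also have "\<dots> \<le> \<bar>x - b\<bar>" using assms(2,3) by (intro mult_left_le_one_le) auto
  finally have "\<bar>G b * (x - b)\<bar> \<le> vmax - vmin" using assms(4,5) by auto
  then show ?thesis
    using Ghat_bounds[OF assms(1-3), of vmin b] assms(5) unfolding Psi_def by auto
qed

lemma cdf_return_in_cdf_class:
  assumes "vmin \<le> m" "m \<le> vmax"
  shows "cdf (return borel m) \<in> cdf_class vmin vmax"
  unfolding cdf_class_def using assms prob_space_return[of m borel]
  by (intro CollectI exI[of _ "return borel m"]) (auto simp: measure_return)

lemma Ghat_cdf_return:
  assumes "vmin \<le> m"
  shows "Ghat vmin (cdf (return borel m)) b = max 0 (b - m)"
proof -
  have "cdf (return borel m) = (\<lambda>r. if r \<in> {m..} then 1 else 0)"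
    by (simp add: fun_eq_iff cdf_def measure_return indicator_def)
  then have "Ghat vmin (cdf (return borel m)) b
      = integral {vmin..b} (\<lambda>r. if r \<in> {m..} then 1 else 0 :: real)"
    by (simp only: Ghat_def)
  also have "\<dots> = integral ({m..} \<inter> {vmin..b}) (\<lambda>_. 1 :: real)"
    by (rule integral_restrict_Int)
  also have "{m..} \<inter> {vmin..b} = {m..b}" using assms by auto
  finally show ?thesis by simp
qed

locale bounded_valuation = prob_space M
  for M :: "'a measure" and v :: "'a \<Rightarrow> real" and vmin vmax :: real +
  assumes v_measurable [measurable]: "v \<in> borel_measurable M"
    and v_range: "\<And>\<omega>. \<omega> \<in> space M \<Longrightarrow> v \<omega> \<in> {vmin..vmax}"
begin

lemma integrable_bounded:
  fixes f :: "'a \<Rightarrow> real"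
  assumes "f \<in> borel_measurable M" "\<And>\<omega>. \<omega> \<in> space M \<Longrightarrow> \<bar>f \<omega>\<bar> \<le> B"
  shows "integrable M f"
  using integrable_const_bound[of f B] assms by (auto intro!: AE_I2)

lemma integrable_v: "integrable M v"
  by (rule integrable_bounded[of _ "\<bar>vmin\<bar> + \<bar>vmax\<bar>"]) (auto dest!: v_range)

lemma expectation_in_range: "expectation v \<in> {vmin..vmax}"
  using integral_ge_const[OF integrable_v] integral_le_const[OF integrable_v] v_range
  by (auto intro!: AE_I2)

lemma integrable_Ghat_v:
  assumes "G \<in> cdf_class vmin vmax"
  shows "integrable M (\<lambda>\<omega>. Ghat vmin G (v \<omega>))"
proof (rule integrable_bounded[of _ "vmax - vmin"])
  note G = cdf_class_cdf_properties[OF assms]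
  have "Ghat vmin G \<in> borel_measurable borel"
    using G Ghat_mono borel_measurable_mono by blast
  then show "(\<lambda>\<omega>. Ghat vmin G (v \<omega>)) \<in> borel_measurable M" by measurable
  show "\<bar>Ghat vmin G (v \<omega>)\<bar> \<le> vmax - vmin" if "\<omega> \<in> space M" for \<omega>
    using Ghat_bounds[of G vmin "v \<omega>"] G v_range[OF that] by auto
qed

lemma expected_Psi_le_expected_Ghat:
  assumes "G \<in> cdf_class vmin vmax" "\<beta> \<in> borel_measurable borel"
    and "\<And>x. x \<in> {vmin..vmax} \<Longrightarrow> \<beta> x \<in> {vmin..vmax}"
  shows "expectation (\<lambda>\<omega>. Psi vmin G (v \<omega>) (\<beta> (v \<omega>))) \<le> expectation (\<lambda>\<omega>. Ghat vmin G (v \<omega>))"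
proof (rule integral_mono)
  note G = cdf_class_cdf_properties[OF assms(1)]
  note [measurable] = assms(2)
  have [measurable]: "G \<in> borel_measurable borel" "Ghat vmin G \<in> borel_measurable borel"
    using G Ghat_mono borel_measurable_mono by blast+
  show "integrable M (\<lambda>\<omega>. Psi vmin G (v \<omega>) (\<beta> (v \<omega>)))"
  proof (rule integrable_bounded[of _ "2 * (vmax - vmin)"])
    show "(\<lambda>\<omega>. Psi vmin G (v \<omega>) (\<beta> (v \<omega>))) \<in> borel_measurable M"
      unfolding Psi_def by measurable
    show "\<bar>Psi vmin G (v \<omega>) (\<beta> (v \<omega>))\<bar> \<le> 2 * (vmax - vmin)" if "\<omega> \<in> space M" for \<omega>
      using Psi_abs_le[of G "v \<omega>" vmin vmax] G v_range[OF that] assms(3) by auto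
  qed
  show "integrable M (\<lambda>\<omega>. Ghat vmin G (v \<omega>))" by (rule integrable_Ghat_v[OF assms(1)])
  show "Psi vmin G (v \<omega>) (\<beta> (v \<omega>)) \<le> Ghat vmin G (v \<omega>)" if "\<omega> \<in> space M" for \<omega>
    using Psi_le_Ghat[of G vmin "v \<omega>"] G v_range[OF that] assms(3)[OF v_range[OF that]] by auto
qed

text \<open>Psi is affine in the value, so a fixed bid earns Psi at the expected value.\<close>

lemma expected_Psi_const_bid:
  "expectation (\<lambda>\<omega>. Psi vmin G (v \<omega>) b) = Psi vmin G (expectation v) b"
proof -
  have "expectation (\<lambda>\<omega>. Psi vmin G (v \<omega>) b)
      = expectation (\<lambda>\<omega>. G b * v \<omega> + (Ghat vmin G b - G b * b))"
    by (simp add: Psi_def algebra_simps)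
  also have "\<dots> = G b * expectation v + (Ghat vmin G b - G b * b)"
    using integrable_v by (simp add: prob_space)
  finally show ?thesis by (simp add: Psi_def algebra_simps)
qed

lemma expected_Ghat_gap_le:
  assumes "G \<in> cdf_class vmin vmax"
  shows "expectation (\<lambda>\<omega>. Ghat vmin G (v \<omega>)) - Ghat vmin G (expectation v)
    \<le> expectation (\<lambda>\<omega>. max 0 (v \<omega> - expectation v))"
proof -
  note G = cdf_class_cdf_properties[OF assms]
  have "expectation (\<lambda>\<omega>. Ghat vmin G (v \<omega>)) - Ghat vmin G (expectation v)
      = expectation (\<lambda>\<omega>. Ghat vmin G (v \<omega>) - Ghat vmin G (expectation v))"
    using integrable_Ghat_v[OF assms] by (simp add: prob_space)
  also have "\<dots> \<le> expectation (\<lambda>\<omega>. max 0 (v \<omega> - expectation v))"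
  proof (rule integral_mono)
    show "integrable M (\<lambda>\<omega>. max 0 (v \<omega> - expectation v))"
      by (rule integrable_bounded[of _ "vmax - vmin"], measurable)
         (use v_range expectation_in_range in fastforce)
    show "Ghat vmin G (v \<omega>) - Ghat vmin G (expectation v) \<le> max 0 (v \<omega> - expectation v)"
      for \<omega>
      using Ghat_increment_le[of G vmin] G expectation_in_range by auto
  qed (use integrable_Ghat_v[OF assms] in simp)
  finally show ?thesis .
qed

lemma expected_Ghat_gap_point_mass:
  "expectation (\<lambda>\<omega>. Ghat vmin (cdf (return borel (expectation v))) (v \<omega>))
     - Ghat vmin (cdf (return borel (expectation v))) (expectation v)
   = expectation (\<lambda>\<omega>. max 0 (v \<omega> - expectation v))"
  using Ghat_cdf_return expectation_in_range by simp

end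

theorem mainTheorem7:
  fixes vmin vmax c :: real and M :: "'a measure" and v :: "'a \<Rightarrow> real"
  assumes "0 \<le> vmin" "vmin < vmax" "0 \<le> c"
    and "prob_space M" "v \<in> borel_measurable M"
    and "\<forall>\<omega>\<in>space M. v \<omega> \<in> {vmin..vmax}"
  shows
    "(\<forall>G\<in>cdf_class vmin vmax. \<forall>x\<in>{vmin..vmax}.
        (\<forall>b\<in>{vmin..vmax}. Psi vmin G x b \<le> Psi vmin G x x) \<and> Psi vmin G x x = Ghat vmin G x)
   \<and> (\<forall>G\<in>cdf_class vmin vmax.
        (\<forall>\<beta>\<in>borel_measurable borel. (\<forall>x\<in>{vmin..vmax}. \<beta> x \<in> {vmin..vmax}) \<longrightarrow>
            integral\<^sup>L M (\<lambda>\<omega>. Psi vmin G (v \<omega>) (\<beta> (v \<omega>))) \<le> integral\<^sup>L M (\<lambda>\<omega>. Ghat vmin G (v \<omega>)))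
        \<and> integral\<^sup>L M (\<lambda>\<omega>. Psi vmin G (v \<omega>) (v \<omega>)) = integral\<^sup>L M (\<lambda>\<omega>. Ghat vmin G (v \<omega>)))
   \<and> (\<forall>G\<in>cdf_class vmin vmax.
        (\<forall>b\<in>{vmin..vmax}. integral\<^sup>L M (\<lambda>\<omega>. Psi vmin G (v \<omega>) b) \<le> Ghat vmin G (integral\<^sup>L M v))
        \<and> integral\<^sup>L M v \<in> {vmin..vmax}
        \<and> integral\<^sup>L M (\<lambda>\<omega>. Psi vmin G (v \<omega>) (integral\<^sup>L M v)) = Ghat vmin G (integral\<^sup>L M v))
   \<and> ((\<exists>G\<in>cdf_class vmin vmax.
          integral\<^sup>L M (\<lambda>\<omega>. Ghat vmin G (v \<omega>)) - Ghat vmin G (integral\<^sup>L M v) > c)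
      \<longleftrightarrow> c < integral\<^sup>L M (\<lambda>\<omega>. max 0 (v \<omega> - integral\<^sup>L M v)))
   \<and> (c < integral\<^sup>L M (\<lambda>\<omega>. max 0 (v \<omega> - integral\<^sup>L M v)) \<longrightarrow>
        cdf (return borel (integral\<^sup>L M v)) \<in> cdf_class vmin vmax
        \<and> integral\<^sup>L M (\<lambda>\<omega>. Ghat vmin (cdf (return borel (integral\<^sup>L M v))) (v \<omega>))
          - Ghat vmin (cdf (return borel (integral\<^sup>L M v))) (integral\<^sup>L M v) > c)"
proof -
  interpret bounded_valuation M v vmin vmax
    using assms(4-6) by (simp add: bounded_valuation_def bounded_valuation_axioms_def)
  have pointwise_optimal: "Psi vmin G x b \<le> Psi vmin G x x"
    if "G \<in> cdf_class vmin vmax" "x \<in> {vmin..vmax}" "b \<in> {vmin..vmax}" for G x b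
    using Psi_le_Ghat[of G vmin x b] cdf_class_cdf_properties[OF that(1)] that(2,3) by simp
  have uninformed_optimal: "expectation (\<lambda>\<omega>. Psi vmin G (v \<omega>) b) \<le> Ghat vmin G (expectation v)"
    if "G \<in> cdf_class vmin vmax" "b \<in> {vmin..vmax}" for G b
    unfolding expected_Psi_const_bid
    using Psi_le_Ghat[of G vmin "expectation v" b] cdf_class_cdf_properties[OF that(1)]
      expectation_in_range that(2) by simp
  have point_mass_class: "cdf (return borel (expectation v)) \<in> cdf_class vmin vmax"
    using cdf_return_in_cdf_class expectation_in_range by simp
  have value_of_information:
    "(\<exists>G\<in>cdf_class vmin vmax. expectation (\<lambda>\<omega>. Ghat vmin G (v \<omega>)) - Ghat vmin G (expectation v) > c)
     \<longleftrightarrow> c < expectation (\<lambda>\<omega>. max 0 (v \<omega> - expectation v))"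
  proof
    assume "\<exists>G\<in>cdf_class vmin vmax.
      expectation (\<lambda>\<omega>. Ghat vmin G (v \<omega>)) - Ghat vmin G (expectation v) > c"
    then obtain G where "G \<in> cdf_class vmin vmax"
      and "expectation (\<lambda>\<omega>. Ghat vmin G (v \<omega>)) - Ghat vmin G (expectation v) > c" ..
    then show "c < expectation (\<lambda>\<omega>. max 0 (v \<omega> - expectation v))"
      using expected_Ghat_gap_le by fastforce
  next
    assume "c < expectation (\<lambda>\<omega>. max 0 (v \<omega> - expectation v))"
    then show "\<exists>G\<in>cdf_class vmin vmax.
      expectation (\<lambda>\<omega>. Ghat vmin G (v \<omega>)) - Ghat vmin G (expectation v) > c"
      using point_mass_class expected_Ghat_gap_point_mass by force
  qed
  show ?thesis
    using pointwise_optimal uninformed_optimal expected_Psi_le_expected_Ghat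
      expectation_in_range value_of_information expected_Ghat_gap_point_mass point_mass_class
    by (simp add: expected_Psi_const_bid)
qed

end
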